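(* Let $n\ge 1$, $k\ge 2$, $\mathcal{K}$ a set of size $k$, $\epsilon\ge 0$ and $p=e^\epsilon/(k-1+e^\epsilon)$. Then the cascades of the full $k$-RR channel $\mathbf{N}$ and the shuffle channel $\mathbf{S}$ in either order are equivalent: $\mathbf{N}\mathbf{S}\equiv\mathbf{S}\mathbf{N}$.
   Context: A dataset is $x=(x_0,\dots,x_{n-1})\in\mathcal{K}^n$; its histogram $h(x)$ is the map $\kappa\mapsto|\{i:x_i=\kappa\}|$, and for a histogram $z$, $\#z$ is the number of datasets with histogram $z$. A channel from finite $\mathcal{X}$ to finite $\mathcal{Y}$ is a row-stochastic matrix; the cascade $\mathbf{C}\mathbf{D}$ of channels $\mathbf{C}:\mathcal{X}\to\mathcal{Y}$, $\mathbf{D}:\mathcal{Y}\to\mathcal{Z}$ is the ordinary matrix product. The full $k$-RR channel $\mathbf{N}:\mathcal{K}^n\to\mathcal{K}^n$ has $\mathbf{N}_{x,y}=\prod_{i=0}^{n-1}q(y_i\mid x_i)$ where $q(b\mid a)=p$ if $b=a$ and $q(b\mid a)=(1-p)/(k-1)$ otherwise. The shuffle channel $\mathbf{S}:\mathcal{K}^n\to\mathcal{K}^n$ has $\mathbf{S}_{x,y}=1/\#h(x)$ if $h(y)=h(x)$ and $0$ otherwise. For a prior $\pi$ on $\mathcal{X}$ and gain function $g:\mathcal{W}\times\mathcal{X}\to[0,\infty)$ ($\mathcal{W}$ finite nonempty), the posterior vulnerability of $\mathbf{C}$ is $V_g[\pi\triangleright\mathbf{C}]=\sum_{y}\max_{w\in\mathcal{W}}\sum_{x}\pi_x\mathbf{C}_{x,y}g(w,x)$.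 Channels $\mathbf{C},\mathbf{C}'$ with the same input set are equivalent ($\mathbf{C}\equiv\mathbf{C}'$) iff $V_g[\pi\triangleright\mathbf{C}]=V_g[\pi\triangleright\mathbf{C}']$ for all priors $\pi$ and all such gain functions $g$. *)

theory Defs
  imports Complex_Main
begin

text \<open>Channels from a finite input set to a finite output set are represented as
  real-valued functions on pairs (row-stochastic matrices).\<close>

definition datasets :: "'a set \<Rightarrow> nat \<Rightarrow> 'a list set" where
  "datasets K n = {xs. set xs \<subseteq> K \<and> length xs = n}"

definition hist :: "'a list \<Rightarrow> 'a \<Rightarrow> nat" where
  "hist x = (\<lambda>\<kappa>. card {i. i < length x \<and> x ! i = \<kappa>})"

definition num_hist :: "'a set \<Rightarrow> nat \<Rightarrow> ('a \<Rightarrow> nat) \<Rightarrow> nat" where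
  "num_hist K n z = card {y \<in> datasets K n. hist y = z}"

definition cascade :: "'y set \<Rightarrow> ('x \<Rightarrow> 'y \<Rightarrow> real) \<Rightarrow> ('y \<Rightarrow> 'z \<Rightarrow> real) \<Rightarrow> 'x \<Rightarrow> 'z \<Rightarrow> real" where
  "cascade Y C D = (\<lambda>x z. \<Sum>y\<in>Y. C x y * D y z)"

definition kRR_q :: "nat \<Rightarrow> real \<Rightarrow> 'a \<Rightarrow> 'a \<Rightarrow> real" where
  "kRR_q k p b a = (if b = a then p else (1 - p) / (real k - 1))"

definition full_kRR :: "nat \<Rightarrow> nat \<Rightarrow> real \<Rightarrow> 'a list \<Rightarrow> 'a list \<Rightarrow> real" where
  "full_kRR n k p = (\<lambda>x y. \<Prod>i<n. kRR_q k p (y ! i) (x ! i))"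

definition shuffle_chan :: "'a set \<Rightarrow> nat \<Rightarrow> 'a list \<Rightarrow> 'a list \<Rightarrow> real" where
  "shuffle_chan K n = (\<lambda>x y. if hist y = hist x then 1 / real (num_hist K n (hist x)) else 0)"

definition post_vuln :: "'x set \<Rightarrow> 'y set \<Rightarrow> 'w set \<Rightarrow> ('w \<Rightarrow> 'x \<Rightarrow> real)
    \<Rightarrow> ('x \<Rightarrow> real) \<Rightarrow> ('x \<Rightarrow> 'y \<Rightarrow> real) \<Rightarrow> real" where
  "post_vuln X Y W g \<pi> C = (\<Sum>y\<in>Y. Max ((\<lambda>w. \<Sum>x\<in>X. \<pi> x * C x y * g w x) ` W))"

definition is_prior :: "'x set \<Rightarrow> ('x \<Rightarrow> real) \<Rightarrow> bool" where
  "is_prior X \<pi> \<longleftrightarrow> (\<forall>x\<in>X. 0 \<le> \<pi> x) \<and> (\<Sum>x\<in>X. \<pi> x) = 1"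

definition is_gain :: "'w set \<Rightarrow> 'x set \<Rightarrow> ('w \<Rightarrow> 'x \<Rightarrow> real) \<Rightarrow> bool" where
  "is_gain W X g \<longleftrightarrow> finite W \<and> W \<noteq> {} \<and> (\<forall>w\<in>W. \<forall>x\<in>X. 0 \<le> g w x)"

end

theory Submission
  imports Defs "HOL-Combinatorics.Permutations"
begin

text \<open>The full k-RR channel N treats all coordinates alike: N(t x, t y) = N(x, y) for every
  permutation t of the positions.  Let [x] denote the histogram class of x, on which the shuffle
  channel is uniform.  Then (N S)(x, z) is the average of N(x, b) over b \<in> [z] and (S N)(x, z) is
  the average of N(a, z) over a \<in> [x].  Double counting the sum of N(a, b) over [x] \<times> [z], whose
  inner sums are constant by the permutation invariance, shows that the two averages coincide.
  So N S and S N are equal as matrices, for every p, which is stronger than equivalence.\<close>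

lemma hist_eq_iff_mset_eq: "hist x = hist y \<longleftrightarrow> mset x = mset y"
proof -
  have "hist xs = count (mset xs)" for xs :: "'a list"
    unfolding hist_def
    by (auto simp: count_mset count_list_eq_length_filter length_filter_conv_card
        intro!: arg_cong[where f = card])
  then show ?thesis by (simp add: multiset_eq_iff fun_eq_iff)
qed

lemma finite_datasets: "finite K \<Longrightarrow> finite (datasets K n)"
  unfolding datasets_def by (rule finite_lists_length_eq)

definition hist_class :: "'a set \<Rightarrow> nat \<Rightarrow> 'a list \<Rightarrow> 'a list set" where
  "hist_class K n z = {y \<in> datasets K n. hist y = hist z}"

lemma finite_hist_class: "finite K \<Longrightarrow> finite (hist_class K n z)"
  by (simp add: hist_class_def finite_datasets)

lemma card_hist_class_pos:
  assumes "finite K" "x \<in> datasets K n"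
  shows "card (hist_class K n x) > 0"
  using assms finite_hist_class by (auto simp: card_gt_0_iff hist_class_def)

lemma permute_list_in_hist_class:
  assumes "t permutes {..<n}" "a \<in> hist_class K n c"
  shows "permute_list t a \<in> hist_class K n c"
  using assms by (auto simp: hist_class_def datasets_def hist_eq_iff_mset_eq simp flip: set_mset_mset)

lemma permute_list_inv_permute_list:
  assumes "t permutes {..<length xs}"
  shows "permute_list (inv t) (permute_list t xs) = xs"
proof -
  have "permute_list (inv t) (permute_list t xs) = permute_list (t \<circ> inv t) xs"
    using permute_list_compose[of "inv t" xs t] permutes_inv[OF assms] by simp
  also have "t \<circ> inv t = id"
    using assms permutes_inv_o(1) by blast
  finally show ?thesis by simp
qed

lemma sum_hist_class_permute_list:
  assumes "t permutes {..<n}"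
  shows "(\<Sum>b\<in>hist_class K n c. f (permute_list t b)) = (\<Sum>b\<in>hist_class K n c. f b)"
proof -
  have "inv t permutes {..<n}"
    using assms permutes_inv by blast
  moreover have "inv (inv t) = t"
    using inv_inv_eq[OF permutes_bij[OF assms]] .
  moreover have "length b = n" if "b \<in> hist_class K n c" for b
    using that by (simp add: hist_class_def datasets_def)
  ultimately show ?thesis
    by (intro sum.reindex_bij_witness[where i = "permute_list (inv t)" and j = "permute_list t"])
      (use assms permute_list_inv_permute_list[of t] permute_list_inv_permute_list[of "inv t"]
        in \<open>auto intro: permute_list_in_hist_class\<close>)
qed

lemma hist_class_permutation:
  assumes "a' \<in> hist_class K n a" "a \<in> datasets K n"
  obtains t where "t permutes {..<n}" "a' = permute_list t a"
proof -
  have "mset a' = mset a"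
    using assms by (auto simp: hist_class_def hist_eq_iff_mset_eq)
  then obtain t where "t permutes {..<length a}" "permute_list t a = a'"
    by (rule mset_eq_permutation)
  moreover have "length a = n"
    using assms by (simp add: datasets_def)
  ultimately show ?thesis
    using that by auto
qed

definition permutation_invariant :: "nat \<Rightarrow> ('a list \<Rightarrow> 'a list \<Rightarrow> real) \<Rightarrow> bool" where
  "permutation_invariant n C \<longleftrightarrow>
     (\<forall>t x y. t permutes {..<n} \<longrightarrow> length x = n \<longrightarrow> length y = n \<longrightarrow>
        C (permute_list t x) (permute_list t y) = C x y)"

lemma permutation_invariant_swap:
  "permutation_invariant n C \<Longrightarrow> permutation_invariant n (\<lambda>x y. C y x)"
  unfolding permutation_invariant_def by blast

lemma permutation_invariant_full_kRR: "permutation_invariant n (full_kRR n k p)"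
  unfolding permutation_invariant_def
proof (intro allI impI)
  fix t and x y :: "'a list"
  assume t: "t permutes {..<n}" and "length x = n" "length y = n"
  then have "full_kRR n k p (permute_list t x) (permute_list t y)
      = (\<Prod>i<n. ((\<lambda>i. kRR_q k p (y ! i) (x ! i)) \<circ> t) i)"
    unfolding full_kRR_def by (intro prod.cong) (auto simp: permute_list_nth)
  also have "\<dots> = full_kRR n k p x y"
    unfolding full_kRR_def by (rule prod.permute[OF t, symmetric])
  finally show "full_kRR n k p (permute_list t x) (permute_list t y) = full_kRR n k p x y" .
qed

lemma permutation_invariant_sum_hist_class:
  assumes C: "permutation_invariant n C" and a': "a' \<in> hist_class K n a" and a: "a \<in> datasets K n"
  shows "(\<Sum>b\<in>hist_class K n c. C a' b) = (\<Sum>b\<in>hist_class K n c. C a b)"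
proof -
  obtain t where t: "t permutes {..<n}" "a' = permute_list t a"
    using hist_class_permutation[OF a' a] .
  have "(\<Sum>b\<in>hist_class K n c. C a' b) = (\<Sum>b\<in>hist_class K n c. C a' (permute_list t b))"
    by (rule sum_hist_class_permute_list[OF t(1), symmetric])
  also have "\<dots> = (\<Sum>b\<in>hist_class K n c. C a b)"
    using C t a by (intro sum.cong) (auto simp: permutation_invariant_def hist_class_def datasets_def)
  finally show ?thesis .
qed

lemma permutation_invariant_double_counting:
  fixes C :: "'a list \<Rightarrow> 'a list \<Rightarrow> real"
  assumes C: "permutation_invariant n C" and "x \<in> datasets K n" "z \<in> datasets K n"
  shows "real (card (hist_class K n x)) * (\<Sum>b\<in>hist_class K n z. C x b)
       = real (card (hist_class K n z)) * (\<Sum>a\<in>hist_class K n x. C a z)"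
proof -
  have "real (card (hist_class K n x)) * (\<Sum>b\<in>hist_class K n z. C x b)
      = (\<Sum>a\<in>hist_class K n x. \<Sum>b\<in>hist_class K n z. C a b)"
    using permutation_invariant_sum_hist_class[OF C _ \<open>x \<in> datasets K n\<close>] by simp
  also have "\<dots> = (\<Sum>b\<in>hist_class K n z. \<Sum>a\<in>hist_class K n x. C a b)"
    by (rule sum.swap)
  also have "\<dots> = real (card (hist_class K n z)) * (\<Sum>a\<in>hist_class K n x. C a z)"
    using permutation_invariant_sum_hist_class[OF permutation_invariant_swap[OF C] _
        \<open>z \<in> datasets K n\<close>] by simp
  finally show ?thesis .
qed

lemma cascade_shuffle_chan_right:
  assumes "finite K"
  shows "cascade (datasets K n) C (shuffle_chan K n) x z
       = (\<Sum>b\<in>hist_class K n z. C x b) / card (hist_class K n z)"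
proof -
  have "cascade (datasets K n) C (shuffle_chan K n) x z
      = (\<Sum>y\<in>datasets K n. if hist y = hist z then C x y else 0) / card (hist_class K n z)"
    unfolding cascade_def shuffle_chan_def num_hist_def hist_class_def sum_divide_distrib
    by (intro sum.cong) auto
  then show ?thesis
    by (simp add: sum.inter_filter[OF finite_datasets[OF assms]] hist_class_def)
qed

lemma cascade_shuffle_chan_left:
  assumes "finite K"
  shows "cascade (datasets K n) (shuffle_chan K n) C x z
       = (\<Sum>a\<in>hist_class K n x. C a z) / card (hist_class K n x)"
proof -
  have "cascade (datasets K n) (shuffle_chan K n) C x z
      = (\<Sum>y\<in>datasets K n. if hist y = hist x then C y z else 0) / card (hist_class K n x)"
    unfolding cascade_def shuffle_chan_def num_hist_def hist_class_def sum_divide_distrib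
    by (intro sum.cong) auto
  then show ?thesis
    by (simp add: sum.inter_filter[OF finite_datasets[OF assms]] hist_class_def)
qed

lemma permutation_invariant_cascade_shuffle_chan_commute:
  assumes "permutation_invariant n C" "finite K" "x \<in> datasets K n" "z \<in> datasets K n"
  shows "cascade (datasets K n) C (shuffle_chan K n) x z
       = cascade (datasets K n) (shuffle_chan K n) C x z"
  using permutation_invariant_double_counting[OF assms(1,3,4)]
    card_hist_class_pos[OF assms(2,3)] card_hist_class_pos[OF assms(2,4)]
  by (simp add: cascade_shuffle_chan_right cascade_shuffle_chan_left assms(2) field_simps)

theorem mainTheorem2:
  fixes K :: "'a set" and n k :: nat and \<epsilon> p :: real
    and W :: "'w set" and g :: "'w \<Rightarrow> 'a list \<Rightarrow> real" and \<pi> :: "'a list \<Rightarrow> real"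
  assumes "n \<ge> 1" and "k \<ge> 2" and "finite K" and "card K = k" and "\<epsilon> \<ge> 0"
    and "p = exp \<epsilon> / (real k - 1 + exp \<epsilon>)"
    and "is_prior (datasets K n) \<pi>"
    and "is_gain W (datasets K n) g"
  shows "post_vuln (datasets K n) (datasets K n) W g \<pi>
           (cascade (datasets K n) (full_kRR n k p) (shuffle_chan K n))
       = post_vuln (datasets K n) (datasets K n) W g \<pi>
           (cascade (datasets K n) (shuffle_chan K n) (full_kRR n k p))"
proof -
  have "cascade (datasets K n) (full_kRR n k p) (shuffle_chan K n) x z
      = cascade (datasets K n) (shuffle_chan K n) (full_kRR n k p) x z"
    if "x \<in> datasets K n" "z \<in> datasets K n" for x z
    using permutation_invariant_cascade_shuffle_chan_commute[OF permutation_invariant_full_kRR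
        \<open>finite K\<close> that] .
  then show ?thesis
    unfolding post_vuln_def by (intro sum.cong refl arg_cong[where f = Max] image_cong) auto
qed

end
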